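(* Let $m>2$ and $k$ be positive integers. Then $\mathrm{msum}(mk-1,k)\ge k/2$.
   Context: For positive integers $n>k$, let $S_n$ be the set of permutations $\pi=(\pi_1,\dots,\pi_n)$ of $1,\dots,n$, with cyclic indexing $\pi_{n+i}=\pi_i$, and $s_i=\sum_{j=0}^{k-1}\pi_{i+j}$ for $i=1,\dots,n$. Define $\mathrm{msum}(\pi,k)=\max_{1\le i\le n}s_i-\frac{k(n+1)}{2}$ and $\mathrm{msum}(n,k)=\min_{\pi\in S_n}\mathrm{msum}(\pi,k)$. *)

theory Defs
  imports Complex_Main
begin

text \<open>Permutations of 1..n represented as lists (pi_1,...,pi_n) = (p!0,...,p!(n-1)).\<close>
definition perms :: "nat \<Rightarrow> nat list set" where
  "perms n = {p. distinct p \<and> set p = {1..n}}"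

definition wsum :: "nat list \<Rightarrow> nat \<Rightarrow> nat \<Rightarrow> nat" where
  "wsum p k i = (\<Sum>j<k. p ! ((i + j) mod length p))"

definition msum_perm :: "nat list \<Rightarrow> nat \<Rightarrow> real" where
  "msum_perm p k = real (Max {wsum p k i | i. i < length p})
      - real k * (real (length p) + 1) / 2"

definition msum :: "nat \<Rightarrow> nat \<Rightarrow> real" where
  "msum n k = Min ((\<lambda>p. msum_perm p k) ` perms n)"

end

theory Submission
  imports Defs
begin

text \<open>Let \<open>n = mk - 1\<close> and start at the position of the entry \<open>n\<close>. The \<open>m\<close> consecutive windows
  starting there cover \<open>mk = n + 1\<close> cyclic positions: every entry once and the entry \<open>n\<close> twice.
  Hence \<open>m\<close> times the maximal window sum is at least \<open>n(n+1)/2 + n = mk(mk+1)/2 - 1\<close>. Since the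
  doubled maximum is an integer and \<open>2/m < 1\<close>, it is at least \<open>k(mk+1)\<close>, which is the claim.\<close>

lemma perms_length:
  assumes "p \<in> perms n"
  shows "length p = n"
  using assms distinct_card unfolding perms_def by fastforce

lemma finite_perms: "finite (perms n)"
proof (rule finite_subset)
  show "perms n \<subseteq> {xs. set xs \<subseteq> {1..n} \<and> length xs \<le> n}"
    using perms_length by (auto simp: perms_def)
qed (rule finite_lists_length_le, simp)

lemma upt_in_perms: "[1..<n+1] \<in> perms n"
  unfolding perms_def by auto

lemma sum_list_perm:
  assumes "p \<in> perms n"
  shows "sum_list p = \<Sum>{1..n}"
  using assms sum_list_distinct_conv_sum_set[of p id] by (simp add: perms_def)

lemma wsum_le_Max:
  assumes "p \<noteq> []"
  shows "wsum p k i \<le> Max {wsum p k i | i. i < length p}"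
proof -
  have "wsum p k i = wsum p k (i mod length p)"
    unfolding wsum_def by (simp add: mod_add_left_eq)
  moreover have "i mod length p < length p" using assms by simp
  ultimately show ?thesis by (auto intro: Max_ge)
qed

lemma sum_consecutive_wsum:
  "(\<Sum>t<m. wsum p k (i + t * k)) = (\<Sum>j<m * k. p ! ((i + j) mod length p))"
proof -
  let ?f = "\<lambda>j. p ! ((i + j) mod length p)"
  have "(\<Sum>t<m. wsum p k (i + t * k)) = (\<Sum>t<m. sum ?f {t * k..<t * k + k})"
  proof (rule sum.cong[OF refl])
    fix t
    have "sum ?f {t * k..<t * k + k} = (\<Sum>j<k. ?f (t * k + j))"
      using sum.shift_bounds_nat_ivl[of ?f 0 "t * k" k]
      by (simp add: atLeast0LessThan add.commute)
    then show "wsum p k (i + t * k) = sum ?f {t * k..<t * k + k}"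
      unfolding wsum_def by (simp add: add.assoc)
  qed
  also have "\<dots> = sum ?f {..<m * k}" by (rule sum.nat_group)
  finally show ?thesis .
qed

lemma sum_list_rotate:
  fixes xs :: "'a::comm_monoid_add list"
  shows "sum_list (rotate i xs) = sum_list xs"
proof -
  let ?d = "i mod length xs"
  have "sum_list (rotate i xs) = sum_list (drop ?d xs) + sum_list (take ?d xs)"
    by (simp add: rotate_drop_take)
  also have "\<dots> = sum_list xs"
    using sum_list_append[of "take ?d xs" "drop ?d xs"] by (simp add: add.commute)
  finally show ?thesis .
qed

lemma sum_cyclic_shift:
  fixes p :: "'a::comm_monoid_add list"
  shows "(\<Sum>j<length p. p ! ((i + j) mod length p)) = sum_list p"
proof -
  have "(\<Sum>j<length p. p ! ((i + j) mod length p)) = sum_list (rotate i p)"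
    unfolding sum_list_sum_nth by (simp add: nth_rotate atLeast0LessThan add.commute)
  then show ?thesis by (simp only: sum_list_rotate)
qed

text \<open>If \<open>m\<close> windows of length \<open>k\<close> wrap around once and one step further, the entry where they
  start is counted twice.\<close>

lemma sum_list_plus_nth_le_Max_wsum:
  assumes "length p + 1 = m * k" and "i < length p"
  shows "sum_list p + p ! i \<le> m * Max {wsum p k i | i. i < length p}"
proof -
  let ?f = "\<lambda>j. p ! ((i + j) mod length p)"
  have "sum_list p + p ! i = sum ?f {..<length p + 1}"
    using assms(2) by (simp add: sum_cyclic_shift)
  also have "\<dots> = (\<Sum>t<m. wsum p k (i + t * k))"
    by (simp only: assms(1) sum_consecutive_wsum)
  also have "\<dots> \<le> (\<Sum>t<m. Max {wsum p k i | i. i < length p})"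
    using assms(2) by (intro sum_mono wsum_le_Max) auto
  finally show ?thesis by simp
qed

lemma double_Max_bound:
  fixes m k n M :: nat
  assumes "m > 2" and "n + 1 = m * k" and "\<Sum>{1..n} + n \<le> m * M"
  shows "k * (m * k + 1) \<le> 2 * M"
proof (rule ccontr)
  have "2 * \<Sum>{1..n} = n * (n + 1)"
    using double_gauss_sum_from_Suc_0[of n, where 'a=nat] by simp
  with assms(3) have lower: "(n + 1) * (n + 2) \<le> 2 * m * M + 2"
    by (simp add: algebra_simps)
  assume "\<not> k * (m * k + 1) \<le> 2 * M"
  hence "m * (2 * M + 1) \<le> m * (k * (n + 2))"
    using assms(2) by (intro mult_le_mono2) simp
  also have "\<dots> = (n + 1) * (n + 2)" by (simp only: assms(2) mult.assoc)
  finally show False using lower assms(1) by (simp add: algebra_simps)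
qed

lemma Max_wsum_perm_bound:
  assumes "m > 2" and "k > 0" and p: "p \<in> perms (m * k - 1)"
  shows "k * (m * k + 1) \<le> 2 * Max {wsum p k i | i. i < length p}"
proof -
  let ?n = "m * k - 1"
  have "m * k \<ge> 3 * 1" using assms(1,2) by (intro mult_le_mono) auto
  then have n: "?n + 1 = m * k" "?n \<ge> 2" by auto
  have len: "length p = ?n" using perms_length[OF p] .
  have "?n \<in> set p" using p n(2) by (auto simp: perms_def)
  then obtain i where i: "i < length p" "p ! i = ?n" by (metis in_set_conv_nth)
  have "sum_list p + p ! i \<le> m * Max {wsum p k i | i. i < length p}"
    using n len i by (intro sum_list_plus_nth_le_Max_wsum) auto
  with n(1) assms(1) show ?thesis
    by (intro double_Max_bound[of m ?n]) (simp_all add: i sum_list_perm[OF p])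
qed

theorem lemma4p1:
  fixes m k :: nat
  assumes "m > 2" and "k > 0"
  shows "msum (m * k - 1) k \<ge> real k / 2"
proof -
  have "real k / 2 \<le> msum_perm p k" if p: "p \<in> perms (m * k - 1)" for p
  proof -
    have "m * k \<ge> 1" using assms by simp
    then have "real k * (real (length p) + 1) + real k
        \<le> 2 * real (Max {wsum p k i | i. i < length p})"
      using Max_wsum_perm_bound[OF assms p] perms_length[OF p]
      by (simp add: algebra_simps of_nat_diff flip: of_nat_mult of_nat_le_iff)
    then show ?thesis unfolding msum_perm_def by (simp add: field_simps)
  qed
  then show ?thesis
    unfolding msum_def using finite_perms upt_in_perms by (subst Min_ge_iff) auto
qed

end
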